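(* Let $d$ be a fixed nonzero complex constant, let $\{a_i\},\{b_i\},\{c_i\},\{d_i\}$ ($i\in\mathbb{Z}$) be complex sequences, and let $m,n\ge0$ be integers such that for $-n\le j\le m$ the quantities $(c_j-a_j)(1-\frac{a_jc_j}{d})$, $(d_j-a_j)(1-\frac{a_jd_j}{d})$, $(c_j-b_j)(1-\frac{b_jc_j}{d})$, $(d_j-b_j)(1-\frac{b_jd_j}{d})$ are nonzero. Then $$\sum_{k=-n}^{m}(b_k-a_k)\Big(1-\frac{a_kb_k}{d}\Big)(d_k-c_k)\Big(1-\frac{c_kd_k}{d}\Big)\frac{\prod_{j=1}^{k-1}(c_j-a_j)(1-\frac{a_jc_j}{d})}{\prod_{j=1}^{k}(d_j-a_j)(1-\frac{a_jd_j}{d})}\frac{\prod_{j=1}^{k-1}(d_j-b_j)(1-\frac{b_jd_j}{d})}{\prod_{j=1}^{k}(c_j-b_j)(1-\frac{b_jc_j}{d})}$$ $$=\frac{\prod_{j=1}^{m}(c_j-a_j)(1-\frac{a_jc_j}{d})}{\prod_{j=1}^{m}(d_j-a_j)(1-\frac{a_jd_j}{d})}\frac{\prod_{j=1}^{m}(d_j-b_j)(1-\frac{b_jd_j}{d})}{\prod_{j=1}^{m}(c_j-b_j)(1-\frac{b_jc_j}{d})}-\frac{\prod_{j=-n}^{0}(d_j-a_j)(1-\frac{a_jd_j}{d})}{\prod_{j=-n}^{0}(c_j-a_j)(1-\frac{a_jc_j}{d})}\frac{\prod_{j=-n}^{0}(c_j-b_j)(1-\frac{b_jc_j}{d})}{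\prod_{j=-n}^{0}(d_j-b_j)(1-\frac{b_jd_j}{d})}.$$
   Context: Products over integer ranges follow the convention: $\prod_{j=k}^{m}A_j=A_k\cdots A_m$ if $m\ge k$; $=1$ if $m=k-1$; $=(A_{m+1}\cdots A_{k-1})^{-1}$ if $m\le k-2$. The constant $d$ is a distinct object from the sequence $d_k$. *)

theory Defs
  imports Complex_Main
begin

text \<open>Generalized product over an integer range with the paper's convention:
  gprod A k m = A k * ... * A m if m \<ge> k; = 1 if m = k - 1;
  = inverse (A (m+1) * ... * A (k-1)) if m \<le> k - 2.\<close>
definition gprod :: "(int \<Rightarrow> complex) \<Rightarrow> int \<Rightarrow> int \<Rightarrow> complex" where
  "gprod A k m = (if m \<ge> k - 1 then (\<Prod>j\<in>{k..m}. A j)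
                  else inverse (\<Prod>j\<in>{m+1..k-1}. A j))"

end

theory Submission
  imports Defs
begin

text \<open>Write \<open>\<theta>(x, y) = (y - x) (1 - x y / d)\<close>. The three-term relation
  \<open>\<theta>(a, b) \<theta>(c, e) = \<theta>(a, c) \<theta>(b, e) - \<theta>(a, e) \<theta>(b, c)\<close> says exactly that the
  \<open>k\<close>-th summand is \<open>F k - F (k - 1)\<close>, where \<open>F k\<close> is the product quotient on the
  right-hand side with upper index \<open>k\<close>; the sum therefore telescopes to \<open>F m - F (-n - 1)\<close>,
  and the convention for reversed products turns \<open>F (-n - 1)\<close> into the second term.\<close>

lemma gprod_reverse: "l \<le> k \<Longrightarrow> gprod A k (l - 1) = inverse (gprod A l (k - 1))"
  by (cases "l = k") (auto simp: gprod_def)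

lemma gprod_step:
  assumes "A k \<noteq> 0 \<or> p \<le> k"
  shows "gprod A p k = gprod A p (k - 1) * A k"
proof (cases "p \<le> k")
  case True
  then have "{p..k} = insert k {p..k - 1}" by auto
  with True show ?thesis by (simp add: gprod_def mult.commute)
next
  case False
  with assms have "A k \<noteq> 0" by auto
  moreover have "{k..p - 1} = insert k {k + 1..p - 1}" using False by auto
  ultimately show ?thesis using False
    by (cases "k = p - 1") (auto simp: gprod_def field_simps)
qed

lemma sum_telescope_int:
  fixes f :: "int \<Rightarrow> 'a::ab_group_add"
  assumes "l \<le> u + 1"
  shows "(\<Sum>k\<in>{l..u}. f k - f (k - 1)) = f u - f (l - 1)"
proof -
  from assms have "l - 1 \<le> u" by simp
  then show ?thesis
  proof (induction u rule: int_ge_induct)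
    case base
    then show ?case by simp
  next
    case (step i)
    then have "{l..i + 1} = insert (i + 1) {l..i}" by auto
    with step show ?case by simp
  qed
qed

lemma gprod_quotient_telescope:
  fixes P Q R S :: "int \<Rightarrow> complex" and p l u :: int
  assumes "l \<le> u + 1"
    and nonzero: "\<And>k. l \<le> k \<Longrightarrow> k \<le> u \<Longrightarrow> P k \<noteq> 0 \<and> Q k \<noteq> 0 \<and> R k \<noteq> 0 \<and> S k \<noteq> 0"
  defines "F \<equiv> \<lambda>k. gprod P p k / gprod Q p k * (gprod R p k / gprod S p k)"
  shows "(\<Sum>k\<in>{l..u}. (P k * R k - Q k * S k)
            * (gprod P p (k - 1) / gprod Q p k) * (gprod R p (k - 1) / gprod S p k))
         = F u - F (l - 1)"
proof -
  have "(P k * R k - Q k * S k)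
          * (gprod P p (k - 1) / gprod Q p k) * (gprod R p (k - 1) / gprod S p k)
        = F k - F (k - 1)" if "k \<in> {l..u}" for k
  proof -
    from that nonzero have nz: "P k \<noteq> 0" "Q k \<noteq> 0" "R k \<noteq> 0" "S k \<noteq> 0" by auto
    then have "gprod P p k = gprod P p (k - 1) * P k" "gprod Q p k = gprod Q p (k - 1) * Q k"
      "gprod R p k = gprod R p (k - 1) * R k" "gprod S p k = gprod S p (k - 1) * S k"
      by (simp_all add: gprod_step)
    with nz show ?thesis
      unfolding F_def
      by (cases "gprod Q p (k - 1) = 0"; cases "gprod S p (k - 1) = 0")
        (simp_all add: field_simps)
  qed
  then show ?thesis
    using sum_telescope_int[OF assms(1), of F] by simp
qed

text \<open>No hypothesis \<open>d \<noteq> 0\<close>: since \<open>x / 0 = 0\<close>, the case \<open>d = 0\<close> is the same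
  polynomial identity in \<open>1 / d\<close>.\<close>

lemma three_term_relation:
  fixes a b c e d :: "'a::field"
  shows "(b - a) * (1 - a * b / d) * ((e - c) * (1 - c * e / d))
       = (c - a) * (1 - a * c / d) * ((e - b) * (1 - b * e / d))
         - (e - a) * (1 - a * e / d) * ((c - b) * (1 - b * c / d))"
  unfolding divide_inverse by algebra

theorem corollary3p7:
  fixes d :: complex and a b c e :: "int \<Rightarrow> complex" and m n :: int
  assumes hd: "d \<noteq> 0" and hm: "m \<ge> 0" and hn: "n \<ge> 0"
    and nz: "\<And>j. -n \<le> j \<Longrightarrow> j \<le> m \<Longrightarrow>
        (c j - a j) * (1 - a j * c j / d) \<noteq> 0 \<and>
        (e j - a j) * (1 - a j * e j / d) \<noteq> 0 \<and>
        (c j - b j) * (1 - b j * c j / d) \<noteq> 0 \<and>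
        (e j - b j) * (1 - b j * e j / d) \<noteq> 0"
  shows "(\<Sum>k\<in>{-n..m}. (b k - a k) * (1 - a k * b k / d) * (e k - c k) * (1 - c k * e k / d)
            * (gprod (\<lambda>j. (c j - a j) * (1 - a j * c j / d)) 1 (k - 1)
               / gprod (\<lambda>j. (e j - a j) * (1 - a j * e j / d)) 1 k)
            * (gprod (\<lambda>j. (e j - b j) * (1 - b j * e j / d)) 1 (k - 1)
               / gprod (\<lambda>j. (c j - b j) * (1 - b j * c j / d)) 1 k))
       = (gprod (\<lambda>j. (c j - a j) * (1 - a j * c j / d)) 1 m
            / gprod (\<lambda>j. (e j - a j) * (1 - a j * e j / d)) 1 m)
         * (gprod (\<lambda>j. (e j - b j) * (1 - b j * e j / d)) 1 m
            / gprod (\<lambda>j. (c j - b j) * (1 - b j * c j / d)) 1 m)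
         - (gprod (\<lambda>j. (e j - a j) * (1 - a j * e j / d)) (-n) 0
            / gprod (\<lambda>j. (c j - a j) * (1 - a j * c j / d)) (-n) 0)
         * (gprod (\<lambda>j. (c j - b j) * (1 - b j * c j / d)) (-n) 0
            / gprod (\<lambda>j. (e j - b j) * (1 - b j * e j / d)) (-n) 0)"
proof -
  define P where "P = (\<lambda>j. (c j - a j) * (1 - a j * c j / d))"
  define Q where "Q = (\<lambda>j. (e j - a j) * (1 - a j * e j / d))"
  define R where "R = (\<lambda>j. (e j - b j) * (1 - b j * e j / d))"
  define S where "S = (\<lambda>j. (c j - b j) * (1 - b j * c j / d))"
  have summand: "(b k - a k) * (1 - a k * b k / d) * (e k - c k) * (1 - c k * e k / d)
      = P k * R k - Q k * S k" for k
    using three_term_relation[where a = "a k" and b = "b k" and c = "c k" and e = "e k"]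
    unfolding P_def Q_def R_def S_def by (simp add: mult.assoc)
  have nonzero: "P k \<noteq> 0 \<and> Q k \<noteq> 0 \<and> R k \<noteq> 0 \<and> S k \<noteq> 0" if "-n \<le> k" "k \<le> m" for k
    using nz[OF that] unfolding P_def Q_def R_def S_def by auto
  have reversed: "gprod A 1 (-n - 1) = inverse (gprod A (-n) 0)" for A
    using gprod_reverse[of "-n" 1] hn by simp
  have "-n \<le> m + 1" using hm hn by simp
  from gprod_quotient_telescope[OF this nonzero, where p = 1]
  have "(\<Sum>k\<in>{-n..m}. (P k * R k - Q k * S k)
            * (gprod P 1 (k - 1) / gprod Q 1 k) * (gprod R 1 (k - 1) / gprod S 1 k))
        = gprod P 1 m / gprod Q 1 m * (gprod R 1 m / gprod S 1 m)
          - gprod Q (-n) 0 / gprod P (-n) 0 * (gprod S (-n) 0 / gprod R (-n) 0)"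
    by (simp add: reversed divide_inverse mult.commute)
  then show ?thesis
    unfolding summand P_def[symmetric] Q_def[symmetric] R_def[symmetric] S_def[symmetric] .
qed

end
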